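(* Let $c\in(0,1]$ be a constant and consider $m_1\times m_2$ grid graphs with $m_1\ge m_2$. For a random MRPP instance with $n=c\,m_1m_2$ robots on the $m_1\times m_2$ grid, the minimum makespan over all feasible solutions is $m_1+m_2-o(m_1)$ with probability arbitrarily close to $1$ as $m_1\to\infty$; that is, there is a function $f(m_1)=o(m_1)$ such that the probability that the minimum makespan is at least $m_1+m_2-f(m_1)$ tends to $1$ as $m_1\to\infty$. *)

theory Defs
  imports Complex_Main "HOL-Library.FuncSet" "HOL-Library.Landau_Symbols"
begin

definition grid_vertices :: "nat \<Rightarrow> nat \<Rightarrow> (nat \<times> nat) set" where
  "grid_vertices m1 m2 = {0..<m1} \<times> {0..<m2}"

definition grid_adj :: "nat \<times> nat \<Rightarrow> nat \<times> nat \<Rightarrow> bool" where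
  "grid_adj u v \<longleftrightarrow>
     (fst u = fst v \<and> (snd u = Suc (snd v) \<or> snd v = Suc (snd u))) \<or>
     (snd u = snd v \<and> (fst u = Suc (fst v) \<or> fst v = Suc (fst u)))"

definition configs :: "nat \<Rightarrow> nat \<Rightarrow> nat \<Rightarrow> (nat \<Rightarrow> nat \<times> nat) set" where
  "configs m1 m2 n = {s \<in> {..<n} \<rightarrow>\<^sub>E grid_vertices m1 m2. inj_on s {..<n}}"

text \<open>A feasible MRPP solution of makespan T from start s to goal g:
  P t i is the position of robot i at time t.\<close>
definition mrpp_solution ::
  "nat \<Rightarrow> nat \<Rightarrow> nat \<Rightarrow> (nat \<Rightarrow> nat \<times> nat) \<Rightarrow> (nat \<Rightarrow> nat \<times> nat)
     \<Rightarrow> nat \<Rightarrow> (nat \<Rightarrow> nat \<Rightarrow> nat \<times> nat) \<Rightarrow> bool" where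
  "mrpp_solution m1 m2 n s g T P \<longleftrightarrow>
     (\<forall>i<n. P 0 i = s i \<and> P T i = g i) \<and>
     (\<forall>t\<le>T. (\<forall>i<n. P t i \<in> grid_vertices m1 m2) \<and> inj_on (P t) {..<n}) \<and>
     (\<forall>t<T. \<forall>i<n. P (Suc t) i = P t i \<or> grid_adj (P t i) (P (Suc t) i)) \<and>
     (\<forall>t<T. \<forall>i<n. \<forall>j<n. i \<noteq> j \<longrightarrow>
          \<not> (P (Suc t) i = P t j \<and> P (Suc t) j = P t i))"

definition feasible_makespan ::
  "nat \<Rightarrow> nat \<Rightarrow> nat \<Rightarrow> (nat \<Rightarrow> nat \<times> nat) \<Rightarrow> (nat \<Rightarrow> nat \<times> nat) \<Rightarrow> nat \<Rightarrow> bool" where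
  "feasible_makespan m1 m2 n s g T \<longleftrightarrow> (\<exists>P. mrpp_solution m1 m2 n s g T P)"

text \<open>Probability, for a uniformly random instance (independent uniformly random
  start and goal configurations), that the minimum makespan over all feasible
  solutions is at least b (the minimum over an empty set being +infinity).\<close>
definition prob_min_makespan_ge :: "nat \<Rightarrow> nat \<Rightarrow> nat \<Rightarrow> real \<Rightarrow> real" where
  "prob_min_makespan_ge m1 m2 n b =
     real (card {(s, g). s \<in> configs m1 m2 n \<and> g \<in> configs m1 m2 n \<and>
                   (\<forall>T. feasible_makespan m1 m2 n s g T \<longrightarrow> real T \<ge> b)})
     / real (card (configs m1 m2 n \<times> configs m1 m2 n))"

end

(* Put a d x e box A into the lower left corner of the grid and a box B of the same size into the
   upper right corner, where d = ceil(m1^(3/4)) and e = min d m2. A robot that starts in A and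
   has its goal in B has to travel Manhattan distance at least m1 + m2 - 2d - 2e, so it suffices
   that such a robot exists with high probability. Draw start and goal of the robots one after
   the other. While fewer than a/2 robots are placed (a = |A| = |B|), at least a/2 cells of A and
   of B are still free, so the next robot avoids going from A to B with conditional probability
   at most 1 - (a/2N)^2, where N = m1 m2. Since there are at least a/4 robots, no robot goes from
   A to B with probability at most exp(-a^3/(16 N^2)) <= exp(-m1^(1/4)/16). *)

theory Submission
  imports Defs "HOL-Real_Asymp.Real_Asymp"
begin

definition injections :: "'a set \<Rightarrow> nat \<Rightarrow> (nat \<Rightarrow> 'a) set" where
  "injections V k = {s \<in> {..<k} \<rightarrow>\<^sub>E V. inj_on s {..<k}}"

definition avoiding_pairs ::
  "'a set \<Rightarrow> 'a set \<Rightarrow> 'a set \<Rightarrow> nat \<Rightarrow> ((nat \<Rightarrow> 'a) \<times> (nat \<Rightarrow> 'a)) set" where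
  "avoiding_pairs V A B k =
     {(s, g). s \<in> injections V k \<and> g \<in> injections V k \<and> (\<forall>i<k. \<not> (s i \<in> A \<and> g i \<in> B))}"

definition extension_choices ::
  "'a set \<Rightarrow> 'a set \<Rightarrow> 'a set \<Rightarrow> nat \<Rightarrow> (nat \<Rightarrow> 'a) \<Rightarrow> (nat \<Rightarrow> 'a) \<Rightarrow> ('a \<times> 'a) set" where
  "extension_choices V A B k s g =
     (V - s ` {..<k}) \<times> (V - g ` {..<k}) - (A - s ` {..<k}) \<times> (B - g ` {..<k})"

lemma finite_injections: "finite V \<Longrightarrow> finite (injections V k)"
  unfolding injections_def by (auto intro!: finite_PiE)

lemma card_injections: "finite V \<Longrightarrow> card (injections V k) = (\<Prod>i<k. card V - i)"
  using card_inj_on_subset_funcset[of "{..<k}" V "{..<k}"]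
  by (simp add: injections_def atLeast0LessThan)

lemma card_injections_pos: "finite V \<Longrightarrow> k \<le> card V \<Longrightarrow> 0 < card (injections V k)"
  by (simp add: card_injections prod_pos)

lemma injections_Suc_restrict:
  assumes "s \<in> injections V (Suc k)"
  shows "s(k := undefined) \<in> injections V k" and "s k \<in> V - s ` {..<k}"
proof -
  have inj: "inj_on s {..<Suc k}" and "s k \<in> V" using assms by (auto simp: injections_def)
  then show "s k \<in> V - s ` {..<k}" using inj_on_image_mem_iff[OF inj, of k "{..<k}"] by auto
  show "s(k := undefined) \<in> injections V k"
    using assms by (auto simp: injections_def PiE_def extensional_def inj_on_def)
qed

lemma finite_avoiding_pairs: "finite V \<Longrightarrow> finite (avoiding_pairs V A B k)"
  by (rule finite_subset[of _ "injections V k \<times> injections V k"])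
    (auto simp: avoiding_pairs_def finite_injections)

lemma avoiding_pairs_Suc_subset:
  "avoiding_pairs V A B (Suc k) \<subseteq> (\<lambda>((s, g), (u, v)). (s(k := u), g(k := v))) `
     Sigma (avoiding_pairs V A B k) (case_prod (extension_choices V A B k))"
proof
  fix p assume "p \<in> avoiding_pairs V A B (Suc k)"
  then obtain s g where p: "p = (s, g)"
    and s: "s \<in> injections V (Suc k)" and g: "g \<in> injections V (Suc k)"
    and avoid: "\<forall>i<Suc k. \<not> (s i \<in> A \<and> g i \<in> B)"
    by (auto simp: avoiding_pairs_def)
  let ?s = "s(k := undefined)" and ?g = "g(k := undefined)"
  have "(?s, ?g) \<in> avoiding_pairs V A B k"
    using injections_Suc_restrict(1)[OF s] injections_Suc_restrict(1)[OF g] avoid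
    by (auto simp: avoiding_pairs_def)
  moreover have "(s k, g k) \<in> extension_choices V A B k ?s ?g"
    using injections_Suc_restrict(2)[OF s] injections_Suc_restrict(2)[OF g] avoid
    by (auto simp: extension_choices_def)
  moreover have "p = (?s(k := s k), ?g(k := g k))" by (simp add: p)
  ultimately show "p \<in> (\<lambda>((s, g), (u, v)). (s(k := u), g(k := v))) `
     Sigma (avoiding_pairs V A B k) (case_prod (extension_choices V A B k))"
    by force
qed

lemma card_extension_choices_le:
  assumes V: "finite V" and "A \<subseteq> V" "B \<subseteq> V" "a \<le> card A" "a \<le> card B"
    and s: "s \<in> injections V k" and g: "g \<in> injections V k"
  shows "card (extension_choices V A B k s g) \<le> (card V - k)^2 - (a - k)^2"
proof -
  have card_s: "card (s ` {..<k}) = k" and "s ` {..<k} \<subseteq> V"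
    using s by (auto simp: injections_def card_image)
  then have card_Vs: "card (V - s ` {..<k}) = card V - k"
    by (simp add: card_Diff_subset finite_subset V)
  have card_g: "card (g ` {..<k}) = k" and "g ` {..<k} \<subseteq> V"
    using g by (auto simp: injections_def card_image)
  then have card_Vg: "card (V - g ` {..<k}) = card V - k"
    by (simp add: card_Diff_subset finite_subset V)
  have "finite A" "finite B" using assms finite_subset by auto
  then have "a - k \<le> card (A - s ` {..<k})" "a - k \<le> card (B - g ` {..<k})"
    using diff_card_le_card_Diff[of "s ` {..<k}" A] diff_card_le_card_Diff[of "g ` {..<k}" B]
      card_s card_g assms by auto
  moreover have "(A - s ` {..<k}) \<times> (B - g ` {..<k}) \<subseteq> (V - s ` {..<k}) \<times> (V - g ` {..<k})"
    using assms by auto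
  ultimately show ?thesis
    using V \<open>finite A\<close> \<open>finite B\<close>
    by (simp add: extension_choices_def card_Diff_subset card_cartesian_product card_Vs card_Vg
        power2_eq_square diff_le_mono2 mult_le_mono)
qed

lemma card_avoiding_pairs_Suc_le:
  assumes V: "finite V" and "A \<subseteq> V" "B \<subseteq> V" "a \<le> card A" "a \<le> card B"
  shows "card (avoiding_pairs V A B (Suc k))
           \<le> card (avoiding_pairs V A B k) * ((card V - k)^2 - (a - k)^2)"
proof -
  let ?S = "Sigma (avoiding_pairs V A B k) (case_prod (extension_choices V A B k))"
  have fin: "finite ?S"
    using V by (auto intro!: finite_SigmaI finite_avoiding_pairs simp: extension_choices_def)
  have "card (avoiding_pairs V A B (Suc k)) \<le> card ?S"
    using card_mono[OF finite_imageI[OF fin] avoiding_pairs_Suc_subset] card_image_le[OF fin]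
    by (rule le_trans)
  also have "\<dots> = (\<Sum>(s, g)\<in>avoiding_pairs V A B k. card (extension_choices V A B k s g))"
    using V by (subst card_SigmaI)
      (auto simp: finite_avoiding_pairs extension_choices_def intro!: sum.cong)
  also have "\<dots> \<le> (\<Sum>_\<in>avoiding_pairs V A B k. (card V - k)^2 - (a - k)^2)"
    by (intro sum_mono) (auto simp: avoiding_pairs_def intro!: card_extension_choices_le assms)
  finally show ?thesis by (simp add: mult.commute)
qed

lemma extension_factor_le:
  fixes N a k :: nat
  assumes "a \<le> N" "2 * k < a"
  shows "real ((N - k)^2 - (a - k)^2) \<le> real ((N - k)^2) * (1 - (real a / (2 * real N))^2)"
proof -
  have "k < a" "k < N" using assms by auto
  then have N_pos: "0 < real N" by simp
  have lhs: "real ((N - k)^2 - (a - k)^2) = (real N - k)^2 - (real a - k)^2"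
    using \<open>k < a\<close> assms by (simp add: of_nat_diff power_mono)
  have "(real N - k)^2 * (real a / (2 * real N))^2 = ((real N - k) / real N)^2 * (real a / 2)^2"
    using N_pos by (simp add: power_divide field_simps)
  also have "\<dots> \<le> (real a / 2)^2"
    using \<open>k < N\<close> N_pos by (intro mult_left_le_one_le) (auto simp: power_le_one)
  also have "\<dots> \<le> (real a - k)^2"
    using assms by (intro power_mono) auto
  finally show ?thesis
    using \<open>k < N\<close> by (simp add: lhs of_nat_diff algebra_simps)
qed

lemma card_avoiding_pairs_le:
  assumes V: "finite V" and AB: "A \<subseteq> V" "B \<subseteq> V" "a \<le> card A" "a \<le> card B"
    and "2 * K \<le> a" and "k \<le> card V"
  shows "real (card (avoiding_pairs V A B k))
           \<le> real (card (injections V k))^2 * (1 - (real a / (2 * real (card V)))^2) ^ min k K"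
  using \<open>k \<le> card V\<close>
proof (induction k)
  case 0
  have "avoiding_pairs V A B 0 \<subseteq> injections V 0 \<times> injections V 0"
    by (auto simp: avoiding_pairs_def)
  then have "card (avoiding_pairs V A B 0) \<le> card (injections V 0) ^ 2"
    using V by (metis card_cartesian_product card_mono finite_cartesian_product
        finite_injections power2_eq_square)
  then show ?case by simp
next
  case (Suc k)
  define N where "N = card V"
  define q where "q = 1 - (real a / (2 * real N))^2"
  have "a \<le> N" using card_mono[OF V AB(1)] AB(3) N_def by simp
  have "k < N" using Suc.prems N_def by simp
  then have q: "0 \<le> q" "q \<le> 1"
    using \<open>a \<le> N\<close> by (auto simp: q_def power_le_one_iff)
  have IH: "real (card (avoiding_pairs V A B k)) \<le> real (card (injections V k))^2 * q ^ min k K"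
    using Suc by (simp add: q_def N_def)
  have step: "q ^ min k K * real ((N - k)^2 - (a - k)^2) \<le> q ^ min (Suc k) K * real ((N - k)^2)"
  proof (cases "k < K")
    case True
    have "real ((N - k)^2 - (a - k)^2) \<le> real ((N - k)^2) * q"
      using extension_factor_le[OF \<open>a \<le> N\<close>, of k] True \<open>2 * K \<le> a\<close> by (simp add: q_def)
    then have "q ^ k * real ((N - k)^2 - (a - k)^2) \<le> q ^ k * (real ((N - k)^2) * q)"
      using q by (intro mult_left_mono) auto
    then show ?thesis using True by (simp add: mult_ac)
  next
    case False
    then show ?thesis using q by (simp add: mult_left_mono)
  qed
  have "real (card (avoiding_pairs V A B (Suc k)))
          \<le> real (card (avoiding_pairs V A B k)) * real ((N - k)^2 - (a - k)^2)"
    using card_avoiding_pairs_Suc_le[OF V AB, of k] N_def by (simp flip: of_nat_mult)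
  also have "\<dots> \<le> real (card (injections V k))^2 * (q ^ min k K * real ((N - k)^2 - (a - k)^2))"
    using mult_right_mono[OF IH] by (simp add: mult.assoc)
  also have "\<dots> \<le> real (card (injections V k))^2 * (q ^ min (Suc k) K * real ((N - k)^2))"
    by (intro mult_left_mono step) auto
  also have "\<dots> = real (card (injections V (Suc k)))^2 * q ^ min (Suc k) K"
    by (simp add: card_injections V N_def power_mult_distrib)
  finally show ?case unfolding q_def N_def .
qed

lemma one_minus_power_le_exp:
  fixes x :: real
  assumes "x \<le> 1"
  shows "(1 - x) ^ j \<le> exp (- (x * real j))"
proof -
  have "(1 - x) ^ j \<le> exp (- x) ^ j"
    using assms exp_ge_add_one_self[of "- x"] by (intro power_mono) auto
  then show ?thesis by (simp add: mult.commute flip: exp_of_nat_mult)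
qed

lemma card_avoiding_pairs_le_exp:
  assumes V: "finite V" and AB: "A \<subseteq> V" "B \<subseteq> V" "a \<le> card A" "a \<le> card B"
    and "2 \<le> a" "a \<le> 4 * k" "k \<le> card V"
  shows "real (card (avoiding_pairs V A B k))
           \<le> real (card (injections V k))^2 * exp (- (real a ^ 3 / (16 * real (card V)^2)))"
proof -
  define x where "x = (real a / (2 * real (card V)))^2"
  have "a \<le> card V" using card_mono[OF V AB(1)] AB(3) by simp
  then have "real a / (2 * real (card V)) \<le> 1" using \<open>2 \<le> a\<close> by (simp add: field_simps)
  then have x: "0 \<le> x" "x \<le> 1" unfolding x_def by (auto intro: power_le_one)
  have "a \<le> 4 * min k (a div 2)" using \<open>2 \<le> a\<close> \<open>a \<le> 4 * k\<close> by presburger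
  then have "real a / 4 \<le> real (min k (a div 2))" by linarith
  then have "x * (real a / 4) \<le> x * real (min k (a div 2))"
    using x by (intro mult_left_mono)
  moreover have "x * (real a / 4) = real a ^ 3 / (16 * real (card V)^2)"
    by (simp add: x_def power2_eq_square power3_eq_cube)
  ultimately have exponent: "real a ^ 3 / (16 * real (card V)^2) \<le> x * real (min k (a div 2))"
    by simp
  have decay: "(1 - x) ^ min k (a div 2) \<le> exp (- (real a ^ 3 / (16 * real (card V)^2)))"
    using one_minus_power_le_exp[OF x(2), of "min k (a div 2)"] exponent
    by (meson exp_le_cancel_iff neg_le_iff_le order_trans)
  have "real (card (avoiding_pairs V A B k))
          \<le> real (card (injections V k))^2 * (1 - x) ^ min k (a div 2)"
    using card_avoiding_pairs_le[OF assms(1-5) _ \<open>k \<le> card V\<close>, of "a div 2"]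
    unfolding x_def by simp
  also have "\<dots> \<le> real (card (injections V k))^2 * exp (- (real a ^ 3 / (16 * real (card V)^2)))"
    by (intro mult_left_mono decay) auto
  finally show ?thesis .
qed

definition manhattan_dist :: "nat \<times> nat \<Rightarrow> nat \<times> nat \<Rightarrow> int" where
  "manhattan_dist u v = \<bar>int (fst u) - int (fst v)\<bar> + \<bar>int (snd u) - int (snd v)\<bar>"

lemma manhattan_dist_triangle: "manhattan_dist u w \<le> manhattan_dist u v + manhattan_dist v w"
  unfolding manhattan_dist_def by linarith

lemma mrpp_solution_manhattan_dist_le:
  assumes sol: "mrpp_solution m1 m2 n s g T P" and "i < n" and "t \<le> T"
  shows "manhattan_dist (s i) (P t i) \<le> int t"
  using \<open>t \<le> T\<close>
proof (induction t)
  case 0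
  then show ?case using sol \<open>i < n\<close> by (simp add: mrpp_solution_def manhattan_dist_def)
next
  case (Suc t)
  have "P (Suc t) i = P t i \<or> grid_adj (P t i) (P (Suc t) i)"
    using sol \<open>i < n\<close> Suc.prems by (simp add: mrpp_solution_def)
  then have "manhattan_dist (P t i) (P (Suc t) i) \<le> 1"
    by (auto simp: grid_adj_def manhattan_dist_def)
  then show ?case
    using Suc manhattan_dist_triangle[of "s i" "P (Suc t) i" "P t i"] by simp
qed

lemma feasible_makespan_ge_manhattan_dist:
  assumes "feasible_makespan m1 m2 n s g T" and "i < n"
  shows "manhattan_dist (s i) (g i) \<le> int T"
proof -
  obtain P where sol: "mrpp_solution m1 m2 n s g T P"
    using assms(1) unfolding feasible_makespan_def by blast
  then have "P T i = g i" using assms(2) by (simp add: mrpp_solution_def)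
  then show ?thesis using mrpp_solution_manhattan_dist_le[OF sol assms(2) order_refl] by simp
qed

lemma manhattan_dist_opposite_corners:
  assumes "u \<in> {..<d} \<times> {..<e}" and "v \<in> {m1 - d..<m1} \<times> {m2 - e..<m2}"
  shows "int m1 + int m2 - 2 * int d - 2 * int e \<le> manhattan_dist u v"
proof -
  have "int m1 - int d \<le> int (fst v)" "int m2 - int e \<le> int (snd v)"
    "int (fst u) < int d" "int (snd u) < int e"
    using assms by auto
  then show ?thesis unfolding manhattan_dist_def by linarith
qed

lemma configs_eq_injections: "configs m1 m2 n = injections (grid_vertices m1 m2) n"
  by (simp add: configs_def injections_def)

lemma prob_min_makespan_ge_ge_avoiding:
  fixes m1 m2 n :: nat and b :: real
  defines "V \<equiv> grid_vertices m1 m2"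
  assumes "n \<le> m1 * m2"
    and far: "\<And>u v. u \<in> A \<Longrightarrow> v \<in> B \<Longrightarrow> b \<le> manhattan_dist u v"
  shows "1 - real (card (avoiding_pairs V A B n)) / real (card (injections V n))^2
           \<le> prob_min_makespan_ge m1 m2 n b"
proof -
  define Tot where "Tot = injections V n \<times> injections V n"
  define Good where "Good = {(s, g). s \<in> configs m1 m2 n \<and> g \<in> configs m1 m2 n \<and>
                   (\<forall>T. feasible_makespan m1 m2 n s g T \<longrightarrow> real T \<ge> b)}"
  have finV: "finite V" by (simp add: V_def grid_vertices_def)
  have configs: "configs m1 m2 n = injections V n" by (simp add: configs_eq_injections V_def)
  have not_avoiding_good: "Tot - avoiding_pairs V A B n \<subseteq> Good"
  proof
    fix p assume p: "p \<in> Tot - avoiding_pairs V A B n"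
    then obtain s g i where pair: "p = (s, g)" "s \<in> injections V n" "g \<in> injections V n"
      and i: "i < n" "s i \<in> A" "g i \<in> B"
      by (auto simp: Tot_def avoiding_pairs_def)
    have "b \<le> real T" if "feasible_makespan m1 m2 n s g T" for T
      using far[OF i(2,3)] feasible_makespan_ge_manhattan_dist[OF that i(1)] by linarith
    then show "p \<in> Good" using pair by (simp add: Good_def configs)
  qed
  have "finite Good"
    by (rule finite_subset[of _ Tot]) (auto simp: Good_def Tot_def configs finite_injections finV)
  then have count: "real (card Tot) - real (card (avoiding_pairs V A B n)) \<le> real (card Good)"
    using diff_card_le_card_Diff[OF finite_avoiding_pairs[OF finV], of Tot A B n]
      card_mono[OF _ not_avoiding_good] by linarith
  have card_Tot: "card Tot = card (injections V n)^2"
    by (simp add: Tot_def card_cartesian_product power2_eq_square)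
  have pos: "0 < real (card Tot)"
    using card_injections_pos[OF finV] assms by (simp add: card_Tot V_def grid_vertices_def)
  have "1 - real (card (avoiding_pairs V A B n)) / real (card Tot)
          = (real (card Tot) - real (card (avoiding_pairs V A B n))) / real (card Tot)"
    using pos by (simp add: diff_divide_distrib)
  also have "\<dots> \<le> real (card Good) / real (card Tot)"
    using count pos by (intro divide_right_mono) auto
  also have "\<dots> = prob_min_makespan_ge m1 m2 n b"
    by (simp add: prob_min_makespan_ge_def Good_def Tot_def configs)
  finally show ?thesis by (simp add: card_Tot)
qed

lemma prob_min_makespan_ge_corners:
  fixes m1 m2 n d e :: nat and b :: real
  assumes "d \<le> m1" "e \<le> m2" "2 \<le> d * e" "d * e \<le> 4 * n" "n \<le> m1 * m2"
    and b: "b \<le> real m1 + real m2 - 2 * real d - 2 * real e"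
  shows "1 - exp (- (real (d * e) ^ 3 / (16 * (real m1 * real m2)^2)))
           \<le> prob_min_makespan_ge m1 m2 n b"
proof -
  define V where "V = grid_vertices m1 m2"
  define A where "A = {..<d} \<times> {..<e}"
  define B where "B = {m1 - d..<m1} \<times> {m2 - e..<m2}"
  have V: "finite V" "card V = m1 * m2"
    by (simp_all add: V_def grid_vertices_def card_cartesian_product)
  have AB: "A \<subseteq> V" "B \<subseteq> V" "card A = d * e" "card B = d * e"
    using assms by (auto simp: A_def B_def V_def grid_vertices_def card_cartesian_product)
  have "real (card (avoiding_pairs V A B n))
          \<le> real (card (injections V n))^2
              * exp (- (real (d * e) ^ 3 / (16 * (real m1 * real m2)^2)))"
    using card_avoiding_pairs_le_exp[OF V(1) AB(1,2), of "d * e" n] AB(3,4) V(2) assms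
    by (simp add: power_mult_distrib)
  moreover have "0 < card (injections V n)"
    using card_injections_pos[OF V(1)] V(2) assms(5) by simp
  ultimately have "real (card (avoiding_pairs V A B n)) / real (card (injections V n))^2
                     \<le> exp (- (real (d * e) ^ 3 / (16 * (real m1 * real m2)^2)))"
    by (simp add: divide_le_eq mult.commute)
  moreover have "b \<le> manhattan_dist u v" if "u \<in> A" "v \<in> B" for u v
    using manhattan_dist_opposite_corners[of u d e v m1 m2] that b
    by (simp add: A_def B_def)
  ultimately show ?thesis
    using prob_min_makespan_ge_ge_avoiding[of n m1 m2 A B b] assms(5) V_def by fastforce
qed

lemma corner_area_cube_ge:
  fixes d h m :: nat and r :: real
  assumes "1 \<le> r" and m: "real m = r ^ 4" and d: "r ^ 3 \<le> real d" and "1 \<le> h" "h \<le> m"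
  shows "r * (real m * real h)^2 \<le> real (d * min d h) ^ 3"
proof (cases "h \<le> d")
  case True
  have "r * (real m * real h)^2 = (r ^ 3) ^ 3 * real h ^ 2"
    using m by (simp add: power_mult_distrib flip: power_mult power_Suc)
  also have "\<dots> \<le> real d ^ 3 * real h ^ 3"
    using assms by (intro mult_mono power_mono power_increasing) auto
  also have "\<dots> = real (d * min d h) ^ 3"
    using True by (simp add: power_mult_distrib)
  finally show ?thesis .
next
  case False
  have "r * (real m * real h)^2 \<le> r * (real m * real m)^2"
    using assms by (intro mult_left_mono power_mono mult_left_mono) auto
  also have "\<dots> = r ^ 17"
    using m by (simp add: power_mult_distrib flip: power_mult power_add power_Suc)
  also have "\<dots> \<le> ((r ^ 3) ^ 3) ^ 2"
    using assms by (simp flip: power_mult) (intro power_increasing; simp)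
  also have "\<dots> \<le> (real d ^ 3) ^ 2"
    using assms by (intro power_mono) auto
  also have "\<dots> = real (d * min d h) ^ 3"
    using False by (simp add: power_mult_distrib flip: power_mult)
  finally show ?thesis .
qed

lemma robot_count_bounds:
  fixes c :: real and m h d :: nat
  assumes "c \<le> 1" "1 \<le> h" "real d + 4 \<le> 4 * c * real m"
  shows "nat \<lfloor>c * real m * real h\<rfloor> \<le> m * h" and "d * h \<le> 4 * nat \<lfloor>c * real m * real h\<rfloor>"
proof -
  have "0 < c * real m" using assms(3) by linarith
  then have "0 < c" by (simp add: zero_less_mult_iff)
  have "c * (real m * real h) \<le> real m * real h"
    using assms \<open>0 < c\<close> by (intro mult_left_le_one_le) auto
  then have "\<lfloor>c * real m * real h\<rfloor> \<le> int (m * h)" by (simp add: floor_le_iff mult.assoc)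
  then show "nat \<lfloor>c * real m * real h\<rfloor> \<le> m * h" by linarith
  have "4 * real h \<le> (4 * c * real m - real d) * real h"
    using assms by (intro mult_right_mono) auto
  moreover have "c * real m * real h - 1 \<le> real (nat \<lfloor>c * real m * real h\<rfloor>)"
    using \<open>0 < c\<close> by linarith
  ultimately have "real (d * h) \<le> real (4 * nat \<lfloor>c * real m * real h\<rfloor>)"
    using assms(2) by (simp add: algebra_simps)
  then show "d * h \<le> 4 * nat \<lfloor>c * real m * real h\<rfloor>" by (simp only: of_nat_le_iff)
qed

lemma prob_min_makespan_ge_large_grid:
  fixes c :: real and m h :: nat
  assumes "c \<le> 1" "1 \<le> h" "h \<le> m" and "2 \<le> real m powr (3/4)"
    and "real m powr (3/4) + 1 \<le> real m" and "real m powr (3/4) + 5 \<le> 4 * c * real m"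
  shows "1 - exp (- (real m powr (1/4) / 16))
           \<le> prob_min_makespan_ge m h (nat \<lfloor>c * real m * real h\<rfloor>)
                (real m + real h - 4 * (real m powr (3/4) + 1))"
proof -
  define r where "r = real m powr (1/4)"
  define d where "d = nat \<lceil>real m powr (3/4)\<rceil>"
  define e where "e = min d h"
  have "0 < real m" using assms(4) by (cases "m = 0") auto
  then have r: "1 \<le> r" "real m = r ^ 4" "r ^ 3 = real m powr (3/4)"
    by (auto simp: r_def powr_power ge_one_powr_ge_zero)
  have d: "real m powr (3/4) \<le> real d" "real d \<le> real m powr (3/4) + 1"
    unfolding d_def using powr_ge_zero[of "real m" "3/4"] by (simp_all add: real_nat_ceiling_ge)
  have "2 \<le> d" "d \<le> m" using d assms(4,5) by linarith+
  have n: "nat \<lfloor>c * real m * real h\<rfloor> \<le> m * h" "d * h \<le> 4 * nat \<lfloor>c * real m * real h\<rfloor>"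
    using robot_count_bounds[OF assms(1,2), of d m] d assms(6) by linarith+
  have "r * (real m * real h)^2 \<le> real (d * e) ^ 3"
    using corner_area_cube_ge[OF r(1,2)] r(3) d assms(2,3) by (simp add: e_def)
  then have "exp (- (real (d * e) ^ 3 / (16 * (real m * real h)^2))) \<le> exp (- (r / 16))"
    using \<open>0 < real m\<close> assms(2) by (simp add: field_simps)
  moreover have "1 - exp (- (real (d * e) ^ 3 / (16 * (real m * real h)^2)))
      \<le> prob_min_makespan_ge m h (nat \<lfloor>c * real m * real h\<rfloor>)
           (real m + real h - 4 * (real m powr (3/4) + 1))"
  proof (rule prob_min_makespan_ge_corners)
    show "2 \<le> d * e" using mult_le_mono[of 2 d 1 e] \<open>2 \<le> d\<close> assms(2) by (simp add: e_def)
    show "d * e \<le> 4 * nat \<lfloor>c * real m * real h\<rfloor>"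
      unfolding e_def by (rule le_trans[OF mult_le_mono2[OF min.cobounded2] n(2)])
    show "real m + real h - 4 * (real m powr (3/4) + 1) \<le> real m + real h - 2 * real d - 2 * real e"
      using d by (simp add: e_def of_nat_min)
  qed (use \<open>d \<le> m\<close> n(1) in \<open>auto simp: e_def\<close>)
  ultimately show ?thesis unfolding r_def by linarith
qed

theorem mainTheorem2:
  fixes c :: real
  assumes "0 < c" and "c \<le> 1"
  shows "\<exists>f :: nat \<Rightarrow> real. f \<in> o(\<lambda>m. real m) \<and>
           (\<forall>\<epsilon>>0. \<exists>M. \<forall>m1 \<ge> M. \<forall>m2. 1 \<le> m2 \<and> m2 \<le> m1 \<longrightarrow>
              prob_min_makespan_ge m1 m2 (nat \<lfloor>c * real m1 * real m2\<rfloor>)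
                 (real m1 + real m2 - f m1) \<ge> 1 - \<epsilon>)"
proof (intro exI[of _ "\<lambda>m. 4 * (real m powr (3/4) + 1)"] conjI allI impI, goal_cases)
  case 1
  show ?case by real_asymp
next
  case (2 \<epsilon>)
  have "\<forall>\<^sub>F m in sequentially. 2 \<le> real m powr (3/4) \<and> real m powr (3/4) + 1 \<le> real m \<and>
          real m powr (3/4) + 5 \<le> 4 * c * real m \<and> exp (- (real m powr (1/4) / 16)) \<le> \<epsilon>"
    using assms(1) \<open>0 < \<epsilon>\<close> by (intro eventually_conj) real_asymp+
  then show ?case
    unfolding eventually_sequentially
    using prob_min_makespan_ge_large_grid[OF assms(2)] by (smt (verit))
qed

end
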